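(* Let $(\Xi,\mathcal{F},P)$ be a probability space with a filtration of sub-$\sigma$-algebras $\mathcal{F}_1\subset\mathcal{F}_2\subset\cdots\subset\mathcal{F}$, where $\mathcal{F}_1=\{\emptyset,\Xi\}$. Let $\mathcal{Z}_t$ denote the space of (almost surely bounded) $\mathcal{F}_t$-measurable functions $\Xi\to\mathbb{R}$, and $\mathcal{Z}_{t,\infty}:=\mathcal{Z}_t\times\mathcal{Z}_{t+1}\times\cdots$. For each $t\ge 2$ let $\rho_t:\mathcal{Z}_t\to\mathcal{Z}_{t-1}$ be a coherent one-step conditional risk measure, and for $t\ge 3$ define $\tilde\rho_t:=\mathbb{E}[\,\cdot\,|\mathcal{F}_{t-2}]\circ\rho_t:\mathcal{Z}_t\to\mathcal{Z}_{t-2}$. Fix $0<\gamma<1$. For almost surely bounded sequences $Z_{[k,\infty]}\in\mathcal{Z}_{k,\infty}$ define the dynamic risk measure $\{\mathbb{F}_{k,\infty}\}_{k\ge1}$ by $$\mathbb{F}_{1,\infty}(Z_{[1,\infty]})=Z_1+\rho_2\Big(\gamma Z_2+\tilde\rho_3\Big(\gamma^2 Z_3+\tilde\rho_4\Big(\gamma^3 Z_4+\cdots\Big)\Big)\Big),$$ and for $k\ge 2$ $$\mathbb{F}_{k,\infty}(Z_{[k,\infty]})=\gamma^{k-1}Z_k+\tilde\rho_{k+1}\Big(\gamma^{k}Z_{k+1}+\tilde\rho_{k+2}\Big(\gamma^{k+1}Z_{k+2}+\cdots\Big)\Big),$$ where each infinitely nested expression is understood as the limit as $T\to\infty$ of the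 corresponding expression truncated after the term $\gamma^{T-1}Z_T$ (this limit exists for almost surely bounded sequences). Then $\{\mathbb{F}_{k,\infty}\}_{k\ge1}$ is time consistent: for all $1\le l<k$ and all almost surely bounded $Z_{[l,\infty]},W_{[l,\infty]}\in\mathcal{Z}_{l,\infty}$, if $Z_i=W_i$ for all $i=l,\ldots,k-1$ and $\mathbb{F}_{k,\infty}(Z_{[k,\infty]})\ge\mathbb{F}_{k,\infty}(W_{[k,\infty]})$, then $\mathbb{F}_{l,\infty}(Z_{[l,\infty]})\ge\mathbb{F}_{l,\infty}(W_{[l,\infty]})$.
   Context: A coherent one-step conditional risk measure is a mapping $\rho:\mathcal{Z}_{k+1}\to\mathcal{Z}_k$ satisfying: (1) monotonicity: $Z_1\ge Z_2$ implies $\rho(Z_1)\ge\rho(Z_2)$; (2) convexity: $\rho(cZ_1+(1-c)Z_2)\le c\rho(Z_1)+(1-c)\rho(Z_2)$ for $c\in[0,1]$; (3) translation invariance: $\rho(Z+W)=\rho(Z)+W$ for $W\in\mathcal{Z}_k$, $Z\in\mathcal{Z}_{k+1}$; (4) positive homogeneity: $\rho(cZ)=c\rho(Z)$ for $c\ge0$. All inequalities between random variables are almost sure. A sequence $Z_{[1,\infty]}$ is almost surely bounded if $\sup_t \operatorname{ess\,sup}|Z_t|<\infty$. In the paper, $Z_t$ are immediate rewards $r_t$ of an MDP and $\mathcal{F}_t$ is generated by the state history $s_{[1,t]}$; a typical choice is $\rho_t(r_t)=(1-\lambda_t)\mathbb{E}[r_t|\mathcal{F}_{t-1}]+\lambda_t\,\mathrm{CVaR}_{\alpha_t}[r_t|\mathcal{F}_{t-1}]$.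 *)

theory Defs
  imports "HOL-Probability.Probability"
begin

definition Zsp :: "'a measure \<Rightarrow> (nat \<Rightarrow> 'a measure) \<Rightarrow> nat \<Rightarrow> ('a \<Rightarrow> real) set" where
  "Zsp M F t = {X. X \<in> borel_measurable (F t) \<and> (\<exists>C. AE x in M. \<bar>X x\<bar> \<le> C)}"

definition coherent_one_step :: "'a measure \<Rightarrow> (nat \<Rightarrow> 'a measure) \<Rightarrow> nat \<Rightarrow> (('a \<Rightarrow> real) \<Rightarrow> ('a \<Rightarrow> real)) \<Rightarrow> bool" where
  "coherent_one_step M F t \<rho> \<longleftrightarrow>
     (\<forall>Z \<in> Zsp M F t. \<rho> Z \<in> Zsp M F (t - 1)) \<and>
     (\<forall>Z1 \<in> Zsp M F t. \<forall>Z2 \<in> Zsp M F t.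
        (AE x in M. Z1 x \<ge> Z2 x) \<longrightarrow> (AE x in M. \<rho> Z1 x \<ge> \<rho> Z2 x)) \<and>
     (\<forall>Z1 \<in> Zsp M F t. \<forall>Z2 \<in> Zsp M F t. \<forall>c::real. 0 \<le> c \<and> c \<le> 1 \<longrightarrow>
        (AE x in M. \<rho> (\<lambda>y. c * Z1 y + (1 - c) * Z2 y) x \<le> c * \<rho> Z1 x + (1 - c) * \<rho> Z2 x)) \<and>
     (\<forall>Z \<in> Zsp M F t. \<forall>W \<in> Zsp M F (t - 1).
        (AE x in M. \<rho> (\<lambda>y. Z y + W y) x = \<rho> Z x + W x)) \<and>
     (\<forall>Z \<in> Zsp M F t. \<forall>c::real. 0 \<le> c \<longrightarrow>
        (AE x in M. \<rho> (\<lambda>y. c * Z y) x = c * \<rho> Z x))"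

definition rop :: "'a measure \<Rightarrow> (nat \<Rightarrow> 'a measure) \<Rightarrow> (nat \<Rightarrow> ('a \<Rightarrow> real) \<Rightarrow> ('a \<Rightarrow> real))
                   \<Rightarrow> nat \<Rightarrow> ('a \<Rightarrow> real) \<Rightarrow> ('a \<Rightarrow> real)" where
  "rop M F \<rho> t X = (if t = 2 then \<rho> 2 X else real_cond_exp M (F (t - 2)) (\<rho> t X))"

text \<open>Thus nest (T-k) k Z is F_(k,infinity) truncated after gamma^(T-1) Z_T.\<close>
fun nest :: "'a measure \<Rightarrow> (nat \<Rightarrow> 'a measure) \<Rightarrow> (nat \<Rightarrow> ('a \<Rightarrow> real) \<Rightarrow> ('a \<Rightarrow> real))
              \<Rightarrow> real \<Rightarrow> nat \<Rightarrow> nat \<Rightarrow> (nat \<Rightarrow> 'a \<Rightarrow> real) \<Rightarrow> ('a \<Rightarrow> real)" where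
  "nest M F \<rho> \<gamma> 0 j Z = (\<lambda>x. \<gamma> ^ (j - 1) * Z j x)"
| "nest M F \<rho> \<gamma> (Suc n) j Z =
     (\<lambda>x. \<gamma> ^ (j - 1) * Z j x + rop M F \<rho> (Suc j) (nest M F \<rho> \<gamma> n (Suc j) Z) x)"

definition Finf :: "'a measure \<Rightarrow> (nat \<Rightarrow> 'a measure) \<Rightarrow> (nat \<Rightarrow> ('a \<Rightarrow> real) \<Rightarrow> ('a \<Rightarrow> real))
              \<Rightarrow> real \<Rightarrow> nat \<Rightarrow> (nat \<Rightarrow> 'a \<Rightarrow> real) \<Rightarrow> ('a \<Rightarrow> real)" where
  "Finf M F \<rho> \<gamma> k Z = (\<lambda>x. lim (\<lambda>n. nest M F \<rho> \<gamma> n k Z x))"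

definition bounded_seq :: "'a measure \<Rightarrow> (nat \<Rightarrow> 'a measure) \<Rightarrow> nat \<Rightarrow> (nat \<Rightarrow> 'a \<Rightarrow> real) \<Rightarrow> bool" where
  "bounded_seq M F l Z \<longleftrightarrow> (\<forall>i\<ge>l. Z i \<in> Zsp M F i) \<and>
     (\<exists>C. \<forall>i\<ge>l. AE x in M. \<bar>Z i x\<bar> \<le> C)"

end

theory Submission imports Defs begin

text \<open>Each operator \<open>rop t\<close> (that is, \<open>\<rho>\<^sub>2\<close> or \<open>E[\<rho>\<^sub>t \<cdot> | F\<^sub>t\<^sub>-\<^sub>2]\<close>) is monotone
  and commutes with adding constants, hence 1-Lipschitz for the almost sure sup norm.
  So the truncations \<open>nest n k Z\<close> have geometrically decaying increments and converge
  almost surely, and passing to the limit gives the recursion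
  \<open>Finf j Z = \<gamma>\<^sup>j\<^sup>-\<^sup>1 Z\<^sub>j + rop (j+1) (Finf (j+1) Z)\<close> almost surely.
  Monotonicity of \<open>rop (j+1)\<close> then carries the inequality at time \<open>k\<close> back to time \<open>l\<close>
  one step at a time.\<close>

lemma convergent_geometric_increments:
  fixes f :: "nat \<Rightarrow> real"
  assumes inc: "\<And>n. \<bar>f (Suc n) - f n\<bar> \<le> K * q ^ n" and q: "0 \<le> q" "q < 1"
  shows "convergent f" and "\<bar>lim f - f n\<bar> \<le> K * q ^ n / (1 - q)"
proof -
  define d where "d i = f (Suc i) - f i" for i
  have geom: "summable (\<lambda>i. K * q ^ i)"
    using q by (intro summable_mult summable_geometric) simp
  have abs_d: "summable (\<lambda>i. \<bar>d i\<bar>)"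
    unfolding d_def by (rule summable_rabs_comparison_test[OF _ geom]) (use inc in blast)
  then have d: "summable d" by (rule summable_rabs_cancel)
  have "(\<lambda>n. f 0 + (\<Sum>i<n. d i)) \<longlonglongrightarrow> f 0 + suminf d"
    using d by (intro tendsto_add tendsto_const summable_LIMSEQ)
  then have lim: "f \<longlonglongrightarrow> f 0 + suminf d"
    by (simp add: d_def sum_lessThan_telescope)
  then show "convergent f" by (rule convergentI)
  have "lim f - f n = (\<Sum>i. d (i + n))"
    using limI[OF lim] suminf_split_initial_segment[OF d, of n]
    by (simp add: d_def sum_lessThan_telescope)
  also have "\<bar>\<dots>\<bar> \<le> (\<Sum>i. \<bar>d (i + n)\<bar>)"
    using summable_ignore_initial_segment[OF abs_d] by (rule summable_rabs)
  also have "\<dots> \<le> (\<Sum>i. K * q ^ n * q ^ i)"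
  proof (rule suminf_le)
    show "\<bar>d (i + n)\<bar> \<le> K * q ^ n * q ^ i" for i
      using inc[of "i + n"] by (simp add: d_def power_add mult_ac)
    show "summable (\<lambda>i. \<bar>d (i + n)\<bar>)" by (rule summable_ignore_initial_segment[OF abs_d])
    show "summable (\<lambda>i. K * q ^ n * q ^ i)"
      using q by (intro summable_mult summable_geometric) simp
  qed
  also have "\<dots> = K * q ^ n / (1 - q)"
    using q by (simp add: suminf_mult suminf_geometric summable_geometric divide_simps)
  finally show "\<bar>lim f - f n\<bar> \<le> K * q ^ n / (1 - q)" .
qed

locale discounted_risk_filtration = prob_space M for M :: "'a measure" +
  fixes F :: "nat \<Rightarrow> 'a measure" and \<rho> :: "nat \<Rightarrow> ('a \<Rightarrow> real) \<Rightarrow> ('a \<Rightarrow> real)"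
    and \<gamma> :: real
  assumes subalgebra_F: "\<And>t. t \<ge> 1 \<Longrightarrow> subalgebra M (F t)"
    and sets_F_Suc: "\<And>t. t \<ge> 1 \<Longrightarrow> sets (F t) \<subseteq> sets (F (Suc t))"
    and coherent_\<rho>: "\<And>t. t \<ge> 2 \<Longrightarrow> coherent_one_step M F t (\<rho> t)"
    and gamma_pos: "0 < \<gamma>" and gamma_less_1: "\<gamma> < 1"
begin

lemma sets_F_mono:
  assumes "1 \<le> a" "a \<le> b"
  shows "sets (F a) \<subseteq> sets (F b)"
  using assms(2)
proof (induction b rule: dec_induct)
  case (step n)
  then show ?case using sets_F_Suc[of n] assms(1) by auto
qed simp

lemma measurable_F_mono:
  assumes "1 \<le> a" "a \<le> b" "f \<in> borel_measurable (F a)"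
  shows "f \<in> borel_measurable (F b)"
proof (rule measurable_from_subalg[OF _ assms(3)])
  show "subalgebra (F b) (F a)"
    using sets_F_mono[OF assms(1,2)] subalgebra_F[of a] subalgebra_F[of b] assms(1,2)
    by (auto simp: subalgebra_def)
qed

lemma Zsp_borel_measurable: "1 \<le> t \<Longrightarrow> X \<in> Zsp M F t \<Longrightarrow> X \<in> borel_measurable M"
  unfolding Zsp_def using measurable_from_subalg[OF subalgebra_F] by blast

lemma integrable_Zsp: "1 \<le> t \<Longrightarrow> X \<in> Zsp M F t \<Longrightarrow> integrable M X"
proof -
  assume X: "1 \<le> t" "X \<in> Zsp M F t"
  then obtain C where "AE x in M. \<bar>X x\<bar> \<le> C" by (auto simp: Zsp_def)
  then show ?thesis
    using Zsp_borel_measurable[OF X] by (intro integrable_const_bound[where B=C]) auto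
qed

lemma Zsp_const: "(\<lambda>_. c) \<in> Zsp M F t"
  unfolding Zsp_def by (auto intro!: exI[of _ "\<bar>c\<bar>"])

lemma Zsp_add: "X \<in> Zsp M F t \<Longrightarrow> Y \<in> Zsp M F t \<Longrightarrow> (\<lambda>x. X x + Y x) \<in> Zsp M F t"
proof -
  assume XY: "X \<in> Zsp M F t" "Y \<in> Zsp M F t"
  then obtain C D where "AE x in M. \<bar>X x\<bar> \<le> C" "AE x in M. \<bar>Y x\<bar> \<le> D"
    by (auto simp: Zsp_def)
  then have "AE x in M. \<bar>X x + Y x\<bar> \<le> C + D" by eventually_elim auto
  then show ?thesis using XY by (auto simp: Zsp_def)
qed

lemma Zsp_cmult: "X \<in> Zsp M F t \<Longrightarrow> (\<lambda>x. c * X x) \<in> Zsp M F t"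
proof -
  assume X: "X \<in> Zsp M F t"
  then obtain C where "AE x in M. \<bar>X x\<bar> \<le> C" by (auto simp: Zsp_def)
  then have "AE x in M. \<bar>c * X x\<bar> \<le> \<bar>c\<bar> * C"
    by eventually_elim (auto simp: abs_mult intro: mult_left_mono)
  then show ?thesis using X by (auto simp: Zsp_def)
qed

lemma sigma_finite_subalgebra_F: "1 \<le> s \<Longrightarrow> sigma_finite_subalgebra M (F s)"
  by (intro finite_measure_subalgebra_is_sigma_finite)
    (simp add: finite_measure_subalgebra_def finite_measure_subalgebra_axioms_def
      finite_measure_axioms subalgebra_F)

lemma real_cond_exp_AE_const:
  assumes "1 \<le> s" "integrable M X" "AE x in M. X x = c"
  shows "AE x in M. real_cond_exp M (F s) X x = c"
proof -
  interpret sigma_finite_subalgebra M "F s" using sigma_finite_subalgebra_F assms(1) .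
  have "AE x in M. real_cond_exp M (F s) X x = real_cond_exp M (F s) (\<lambda>_. c) x"
    using assms(2,3) by (intro real_cond_exp_cong) (auto simp: borel_measurable_integrable)
  moreover have "AE x in M. real_cond_exp M (F s) (\<lambda>_. c) x = c"
    by (intro real_cond_exp_F_meas) auto
  ultimately show ?thesis by eventually_elim simp
qed

lemma real_cond_exp_add_const:
  assumes "1 \<le> s" "integrable M X" "integrable M Y" "AE x in M. Y x = X x + c"
  shows "AE x in M. real_cond_exp M (F s) Y x = real_cond_exp M (F s) X x + c"
proof -
  interpret sigma_finite_subalgebra M "F s" using sigma_finite_subalgebra_F assms(1) .
  have c: "integrable M (\<lambda>_. c)" by simp
  have "AE x in M. real_cond_exp M (F s) Y x = real_cond_exp M (F s) (\<lambda>x. X x + c) x"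
    using assms(2-4) by (intro real_cond_exp_cong) (auto simp: borel_measurable_integrable)
  moreover have "AE x in M. real_cond_exp M (F s) (\<lambda>x. X x + c) x
      = real_cond_exp M (F s) X x + real_cond_exp M (F s) (\<lambda>_. c) x"
    using real_cond_exp_add[OF assms(2) c] .
  moreover have "AE x in M. real_cond_exp M (F s) (\<lambda>_. c) x = c"
    using real_cond_exp_AE_const[OF assms(1) c] by simp
  ultimately show ?thesis by eventually_elim simp
qed

lemma \<rho>_Zsp: "2 \<le> t \<Longrightarrow> Z \<in> Zsp M F t \<Longrightarrow> \<rho> t Z \<in> Zsp M F (t - 1)"
  using coherent_\<rho>[of t] unfolding coherent_one_step_def by blast

lemma \<rho>_mono:
  "2 \<le> t \<Longrightarrow> Z1 \<in> Zsp M F t \<Longrightarrow> Z2 \<in> Zsp M F t \<Longrightarrow> (AE x in M. Z2 x \<le> Z1 x)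
    \<Longrightarrow> AE x in M. \<rho> t Z2 x \<le> \<rho> t Z1 x"
  using coherent_\<rho>[of t] unfolding coherent_one_step_def by blast

lemma \<rho>_add:
  "2 \<le> t \<Longrightarrow> Z \<in> Zsp M F t \<Longrightarrow> W \<in> Zsp M F (t - 1)
    \<Longrightarrow> AE x in M. \<rho> t (\<lambda>y. Z y + W y) x = \<rho> t Z x + W x"
  using coherent_\<rho>[of t] unfolding coherent_one_step_def by blast

lemma \<rho>_cmult:
  "2 \<le> t \<Longrightarrow> Z \<in> Zsp M F t \<Longrightarrow> 0 \<le> c \<Longrightarrow> AE x in M. \<rho> t (\<lambda>y. c * Z y) x = c * \<rho> t Z x"
  using coherent_\<rho>[of t] unfolding coherent_one_step_def by blast

lemma integrable_\<rho>: "2 \<le> t \<Longrightarrow> Z \<in> Zsp M F t \<Longrightarrow> integrable M (\<rho> t Z)"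
  using integrable_Zsp[OF _ \<rho>_Zsp] by simp

lemma rop_cond_exp: "t \<noteq> 2 \<Longrightarrow> rop M F \<rho> t Y = real_cond_exp M (F (t - 2)) (\<rho> t Y)"
  by (simp add: rop_def)

lemma rop_Zsp:
  assumes t: "2 \<le> t" and X: "X \<in> Zsp M F t"
  shows "rop M F \<rho> t X \<in> Zsp M F (t - 1)"
proof (cases "t = 2")
  case True
  then show ?thesis using \<rho>_Zsp[OF t X] by (simp add: rop_def)
next
  case False
  interpret S: sigma_finite_subalgebra M "F (t - 2)"
    using sigma_finite_subalgebra_F[of "t - 2"] False t by simp
  obtain C where C: "AE x in M. \<bar>\<rho> t X x\<bar> \<le> C" using \<rho>_Zsp[OF t X] by (auto simp: Zsp_def)
  have "AE x in M. real_cond_exp M (F (t - 2)) (\<rho> t X) x \<le> C"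
    using C by (intro S.real_cond_exp_le_c integrable_\<rho>[OF t X]) auto
  moreover have "AE x in M. -C \<le> real_cond_exp M (F (t - 2)) (\<rho> t X) x"
    using C by (intro S.real_cond_exp_ge_c integrable_\<rho>[OF t X]) auto
  ultimately have "AE x in M. \<bar>real_cond_exp M (F (t - 2)) (\<rho> t X) x\<bar> \<le> C"
    by eventually_elim auto
  moreover have "real_cond_exp M (F (t - 2)) (\<rho> t X) \<in> borel_measurable (F (t - 1))"
    by (rule measurable_F_mono[of "t - 2"]) (use False t in auto)
  ultimately show ?thesis using False by (auto simp: rop_def Zsp_def)
qed

lemma rop_mono:
  assumes t: "2 \<le> t" and X: "X \<in> Zsp M F t" and Y: "Y \<in> Zsp M F t"
    and le: "AE x in M. X x \<le> Y x"
  shows "AE x in M. rop M F \<rho> t X x \<le> rop M F \<rho> t Y x"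
proof (cases "t = 2")
  case True
  then show ?thesis using \<rho>_mono[OF t Y X le] by (simp add: rop_def)
next
  case False
  interpret S: sigma_finite_subalgebra M "F (t - 2)"
    using sigma_finite_subalgebra_F[of "t - 2"] False t by simp
  show ?thesis
    using False \<rho>_mono[OF t Y X le] integrable_\<rho>[OF t X] integrable_\<rho>[OF t Y]
    by (simp add: rop_def S.real_cond_exp_mono)
qed

lemma rop_add_const:
  assumes t: "2 \<le> t" and X: "X \<in> Zsp M F t"
  shows "AE x in M. rop M F \<rho> t (\<lambda>y. X y + c) x = rop M F \<rho> t X x + c"
proof -
  have X_c: "(\<lambda>y. X y + c) \<in> Zsp M F t" by (rule Zsp_add[OF X Zsp_const])
  have \<rho>_X_c: "AE x in M. \<rho> t (\<lambda>y. X y + c) x = \<rho> t X x + c"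
    using \<rho>_add[OF t X Zsp_const] .
  show ?thesis
  proof (cases "t = 2")
    case True
    then show ?thesis using \<rho>_X_c by (simp add: rop_def)
  next
    case False
    then show ?thesis
      unfolding rop_cond_exp[OF False] using t
      by (intro real_cond_exp_add_const integrable_\<rho> X X_c \<rho>_X_c) auto
  qed
qed

lemma rop_zero:
  assumes t: "2 \<le> t"
  shows "AE x in M. rop M F \<rho> t (\<lambda>_. 0) x = 0"
proof -
  have \<rho>_0: "AE x in M. \<rho> t (\<lambda>_. 0) x = 0"
    using \<rho>_cmult[OF t Zsp_const[of 0], of 0] by simp
  show ?thesis
  proof (cases "t = 2")
    case True
    then show ?thesis using \<rho>_0 by (simp add: rop_def)
  next
    case False
    then show ?thesis
      unfolding rop_cond_exp[OF False] using t
      by (intro real_cond_exp_AE_const integrable_\<rho> Zsp_const \<rho>_0) auto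
  qed
qed

lemma rop_lipschitz:
  assumes t: "2 \<le> t" and X: "X \<in> Zsp M F t" and Y: "Y \<in> Zsp M F t"
    and dist: "AE x in M. \<bar>X x - Y x\<bar> \<le> c"
  shows "AE x in M. \<bar>rop M F \<rho> t X x - rop M F \<rho> t Y x\<bar> \<le> c"
proof -
  have "AE x in M. X x \<le> Y x + c" using dist by eventually_elim auto
  then have XY: "AE x in M. rop M F \<rho> t X x \<le> rop M F \<rho> t (\<lambda>y. Y y + c) x"
    by (intro rop_mono[OF t X Zsp_add[OF Y Zsp_const]])
  have "AE x in M. Y x \<le> X x + c" using dist by eventually_elim auto
  then have YX: "AE x in M. rop M F \<rho> t Y x \<le> rop M F \<rho> t (\<lambda>y. X y + c) x"
    by (intro rop_mono[OF t Y Zsp_add[OF X Zsp_const]])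
  show ?thesis using XY YX rop_add_const[OF t X, of c] rop_add_const[OF t Y, of c]
    by eventually_elim (unfold abs_le_iff, linarith)
qed

context
  fixes l :: nat and Z :: "nat \<Rightarrow> 'a \<Rightarrow> real" and B :: real
  assumes Z_seq: "bounded_seq M F l Z" and l_pos: "1 \<le> l"
    and Z_bound: "\<And>i. l \<le> i \<Longrightarrow> AE x in M. \<bar>Z i x\<bar> \<le> B"
begin

lemma Z_Zsp: "l \<le> i \<Longrightarrow> Z i \<in> Zsp M F i"
  using Z_seq by (simp add: bounded_seq_def)

lemma nest_Zsp: "l \<le> j \<Longrightarrow> nest M F \<rho> \<gamma> n j Z \<in> Zsp M F j"
proof (induction n arbitrary: j)
  case 0
  then show ?case by (simp add: Zsp_cmult Z_Zsp)
next
  case (Suc n)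
  have "rop M F \<rho> (Suc j) (nest M F \<rho> \<gamma> n (Suc j) Z) \<in> Zsp M F (Suc j - 1)"
    using Suc l_pos by (intro rop_Zsp Suc.IH) auto
  then show ?case
    using Suc.prems by (simp only: nest.simps) (intro Zsp_add Zsp_cmult Z_Zsp, auto)
qed

lemma nest_Suc_diff:
  "l \<le> j \<Longrightarrow> AE x in M. \<bar>nest M F \<rho> \<gamma> (Suc n) j Z x - nest M F \<rho> \<gamma> n j Z x\<bar> \<le> \<gamma> ^ j * B * \<gamma> ^ n"
proof (induction n arbitrary: j)
  case 0
  have t: "2 \<le> Suc j" using 0 l_pos by simp
  have "AE x in M. \<bar>Z (Suc j) x\<bar> \<le> B" using 0 by (intro Z_bound) simp
  then have "AE x in M. \<bar>\<gamma> ^ j * Z (Suc j) x - 0\<bar> \<le> \<gamma> ^ j * B"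
    by eventually_elim (use gamma_pos in \<open>auto simp: abs_mult intro: mult_left_mono\<close>)
  then have "AE x in M. \<bar>rop M F \<rho> (Suc j) (\<lambda>x. \<gamma> ^ j * Z (Suc j) x) x
      - rop M F \<rho> (Suc j) (\<lambda>_. 0) x\<bar> \<le> \<gamma> ^ j * B"
    using 0 by (intro rop_lipschitz[OF t] Zsp_cmult Z_Zsp Zsp_const) auto
  then show ?case using rop_zero[OF t] by eventually_elim simp
next
  case (Suc n)
  have t: "2 \<le> Suc j" using Suc l_pos by simp
  have "AE x in M. \<bar>rop M F \<rho> (Suc j) (nest M F \<rho> \<gamma> (Suc n) (Suc j) Z) x
      - rop M F \<rho> (Suc j) (nest M F \<rho> \<gamma> n (Suc j) Z) x\<bar> \<le> \<gamma> ^ Suc j * B * \<gamma> ^ n"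
    using Suc by (intro rop_lipschitz[OF t] nest_Zsp Suc.IH) auto
  then show ?case by (simp only: nest.simps) (simp add: mult_ac)
qed

lemma nest_tendsto_Finf:
  assumes j: "l \<le> j"
  shows "AE x in M. (\<lambda>n. nest M F \<rho> \<gamma> n j Z x) \<longlonglongrightarrow> Finf M F \<rho> \<gamma> j Z x
    \<and> (\<forall>n. \<bar>Finf M F \<rho> \<gamma> j Z x - nest M F \<rho> \<gamma> n j Z x\<bar> \<le> \<gamma> ^ j * B * \<gamma> ^ n / (1 - \<gamma>))"
proof -
  have "AE x in M. \<forall>n. \<bar>nest M F \<rho> \<gamma> (Suc n) j Z x - nest M F \<rho> \<gamma> n j Z x\<bar> \<le> \<gamma> ^ j * B * \<gamma> ^ n"
    unfolding AE_all_countable using nest_Suc_diff[OF j] by blast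
  then show ?thesis
  proof eventually_elim
    case (elim x)
    have inc: "\<And>n. \<bar>nest M F \<rho> \<gamma> (Suc n) j Z x - nest M F \<rho> \<gamma> n j Z x\<bar> \<le> \<gamma> ^ j * B * \<gamma> ^ n"
      using elim by blast
    have "convergent (\<lambda>n. nest M F \<rho> \<gamma> n j Z x)"
      by (rule convergent_geometric_increments(1)[OF inc]) (use gamma_pos gamma_less_1 in auto)
    moreover have "\<bar>lim (\<lambda>n. nest M F \<rho> \<gamma> n j Z x) - nest M F \<rho> \<gamma> n j Z x\<bar>
        \<le> \<gamma> ^ j * B * \<gamma> ^ n / (1 - \<gamma>)" for n
      by (rule convergent_geometric_increments(2)[OF inc]) (use gamma_pos gamma_less_1 in auto)
    ultimately show ?case by (simp add: Finf_def convergent_LIMSEQ_iff)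
  qed
qed

lemma Finf_Zsp:
  assumes j: "l \<le> j"
  shows "Finf M F \<rho> \<gamma> j Z \<in> Zsp M F j"
proof -
  have "Finf M F \<rho> \<gamma> j Z \<in> borel_measurable (F j)"
    unfolding Finf_def
    by (rule borel_measurable_lim_metric) (use nest_Zsp[OF j] in \<open>auto simp: Zsp_def\<close>)
  moreover obtain C where C: "AE x in M. \<bar>nest M F \<rho> \<gamma> 0 j Z x\<bar> \<le> C"
    using nest_Zsp[OF j, of 0] by (auto simp: Zsp_def)
  have "AE x in M. \<bar>Finf M F \<rho> \<gamma> j Z x\<bar> \<le> C + \<gamma> ^ j * B / (1 - \<gamma>)"
    using C nest_tendsto_Finf[OF j] by eventually_elim (auto dest!: spec[of _ 0])
  ultimately show ?thesis by (auto simp: Zsp_def)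
qed

lemma rop_nest_tendsto:
  assumes j: "l \<le> j"
  defines "R \<equiv> rop M F \<rho> (Suc j)"
  shows "AE x in M. (\<lambda>n. R (nest M F \<rho> \<gamma> n (Suc j) Z) x) \<longlonglongrightarrow> R (Finf M F \<rho> \<gamma> (Suc j) Z) x"
proof -
  have sj: "l \<le> Suc j" using j by simp
  define b where "b n = \<gamma> ^ Suc j * B * \<gamma> ^ n / (1 - \<gamma>)" for n
  have b: "b \<longlonglongrightarrow> 0"
    unfolding b_def using gamma_pos gamma_less_1
    by (auto intro!: tendsto_eq_intros LIMSEQ_power_zero)
  have
    "AE x in M. \<forall>n. \<bar>R (nest M F \<rho> \<gamma> n (Suc j) Z) x - R (Finf M F \<rho> \<gamma> (Suc j) Z) x\<bar> \<le> b n"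
    unfolding AE_all_countable
  proof
    fix n
    have "AE x in M. \<bar>nest M F \<rho> \<gamma> n (Suc j) Z x - Finf M F \<rho> \<gamma> (Suc j) Z x\<bar> \<le> b n"
      using nest_tendsto_Finf[OF sj] unfolding b_def
      by eventually_elim (auto simp: abs_minus_commute)
    then show
      "AE x in M. \<bar>R (nest M F \<rho> \<gamma> n (Suc j) Z) x - R (Finf M F \<rho> \<gamma> (Suc j) Z) x\<bar> \<le> b n"
      unfolding R_def using j l_pos by (intro rop_lipschitz nest_Zsp Finf_Zsp) auto
  qed
  then show ?thesis
  proof eventually_elim
    case (elim x)
    have "(\<lambda>n. R (nest M F \<rho> \<gamma> n (Suc j) Z) x - R (Finf M F \<rho> \<gamma> (Suc j) Z) x) \<longlonglongrightarrow> 0"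
      by (rule Lim_null_comparison[OF _ b]) (use elim in \<open>simp add: always_eventually\<close>)
    then show ?case by (rule LIM_zero_cancel)
  qed
qed

lemma Finf_recursion:
  assumes j: "l \<le> j"
  shows "AE x in M. Finf M F \<rho> \<gamma> j Z x
    = \<gamma> ^ (j - 1) * Z j x + rop M F \<rho> (Suc j) (Finf M F \<rho> \<gamma> (Suc j) Z) x"
  using rop_nest_tendsto[OF j] nest_tendsto_Finf[OF j]
proof eventually_elim
  case (elim x)
  have "(\<lambda>n. nest M F \<rho> \<gamma> (Suc n) j Z x)
      \<longlonglongrightarrow> \<gamma> ^ (j - 1) * Z j x + rop M F \<rho> (Suc j) (Finf M F \<rho> \<gamma> (Suc j) Z) x"
    unfolding nest.simps by (intro tendsto_add tendsto_const elim(1))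
  moreover have "(\<lambda>n. nest M F \<rho> \<gamma> (Suc n) j Z x) \<longlonglongrightarrow> Finf M F \<rho> \<gamma> j Z x"
    using elim(2) LIMSEQ_Suc by blast
  ultimately show ?case using LIMSEQ_unique by blast
qed

end

lemma Finf_step_mono:
  assumes l_pos: "1 \<le> l" and Z: "bounded_seq M F l Z" and W: "bounded_seq M F l W"
    and j: "l \<le> j" and eq: "AE x in M. Z j x = W j x"
    and le: "AE x in M. Finf M F \<rho> \<gamma> (Suc j) W x \<le> Finf M F \<rho> \<gamma> (Suc j) Z x"
  shows "AE x in M. Finf M F \<rho> \<gamma> j W x \<le> Finf M F \<rho> \<gamma> j Z x"
proof -
  obtain BZ where BZ: "\<And>i. l \<le> i \<Longrightarrow> AE x in M. \<bar>Z i x\<bar> \<le> BZ"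
    using Z by (auto simp: bounded_seq_def)
  obtain BW where BW: "\<And>i. l \<le> i \<Longrightarrow> AE x in M. \<bar>W i x\<bar> \<le> BW"
    using W by (auto simp: bounded_seq_def)
  have "Finf M F \<rho> \<gamma> (Suc j) Z \<in> Zsp M F (Suc j)"
    by (rule Finf_Zsp[OF Z l_pos, where B=BZ]) (use BZ j in auto)
  moreover have "Finf M F \<rho> \<gamma> (Suc j) W \<in> Zsp M F (Suc j)"
    by (rule Finf_Zsp[OF W l_pos, where B=BW]) (use BW j in auto)
  ultimately have "AE x in M. rop M F \<rho> (Suc j) (Finf M F \<rho> \<gamma> (Suc j) W) x
      \<le> rop M F \<rho> (Suc j) (Finf M F \<rho> \<gamma> (Suc j) Z) x"
    using j l_pos by (intro rop_mono le) auto
  moreover have "AE x in M. Finf M F \<rho> \<gamma> j Z x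
      = \<gamma> ^ (j - 1) * Z j x + rop M F \<rho> (Suc j) (Finf M F \<rho> \<gamma> (Suc j) Z) x"
    by (rule Finf_recursion[OF Z l_pos, where B=BZ]) (use BZ j in auto)
  moreover have "AE x in M. Finf M F \<rho> \<gamma> j W x
      = \<gamma> ^ (j - 1) * W j x + rop M F \<rho> (Suc j) (Finf M F \<rho> \<gamma> (Suc j) W) x"
    by (rule Finf_recursion[OF W l_pos, where B=BW]) (use BW j in auto)
  ultimately show ?thesis using eq by eventually_elim simp
qed

end

theorem theorem1:
  fixes M :: "'a measure" and F :: "nat \<Rightarrow> 'a measure"
    and \<rho> :: "nat \<Rightarrow> ('a \<Rightarrow> real) \<Rightarrow> ('a \<Rightarrow> real)"
    and \<gamma> :: real and l k :: nat and Z W :: "nat \<Rightarrow> 'a \<Rightarrow> real"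
  assumes "prob_space M"
    and "\<And>t. t \<ge> 1 \<Longrightarrow> subalgebra M (F t)"
    and "\<And>t. t \<ge> 1 \<Longrightarrow> sets (F t) \<subseteq> sets (F (Suc t))"
    and "sets (F 1) = {{}, space M}"
    and "\<And>t. t \<ge> 2 \<Longrightarrow> coherent_one_step M F t (\<rho> t)"
    and "0 < \<gamma>" and "\<gamma> < 1"
    and "1 \<le> l" and "l < k"
    and "bounded_seq M F l Z" and "bounded_seq M F l W"
    and "\<And>i. l \<le> i \<Longrightarrow> i \<le> k - 1 \<Longrightarrow> AE x in M. Z i x = W i x"
    and "AE x in M. Finf M F \<rho> \<gamma> k Z x \<ge> Finf M F \<rho> \<gamma> k W x"
  shows "AE x in M. Finf M F \<rho> \<gamma> l Z x \<ge> Finf M F \<rho> \<gamma> l W x"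
proof -
  interpret discounted_risk_filtration M F \<rho> \<gamma>
    by (intro discounted_risk_filtration.intro discounted_risk_filtration_axioms.intro)
      (use assms in auto)
  have "AE x in M. Finf M F \<rho> \<gamma> j W x \<le> Finf M F \<rho> \<gamma> j Z x" if "j \<le> k" "l \<le> j" for j
    using that
  proof (induction j rule: inc_induct)
    case base
    show ?case using assms(13) by simp
  next
    case (step j)
    have lj: "l \<le> j" using step.prems .
    have jk: "j \<le> k - 1" using step.hyps(2) by simp
    have "AE x in M. Finf M F \<rho> \<gamma> (Suc j) W x \<le> Finf M F \<rho> \<gamma> (Suc j) Z x"
      using step.IH lj by simp
    then show ?case by (rule Finf_step_mono[OF assms(8,10,11) lj assms(12)[OF lj jk]])
  qed
  then show ?thesis using \<open>l < k\<close> by simp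
qed

end
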